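(* Let $\mathfrak{H}$ be a Euclidean space and let $(\mathcal{X},\mathsf{S},\gamma,(\Lambda_{a})_{a\in\mathcal{A}})$ be a spectral decomposition system for $\mathfrak{H}$ such that the set $\{\Lambda_a\}_{a\in\mathcal{A}}$ is closed in $\mathscr{L}(\mathcal{X},\mathfrak{H})$. Let $(X_n)_{n\in\mathbb{N}}$ be a sequence in $\mathfrak{H}$ converging to some $X\in\mathfrak{H}$ and, for every $n\in\mathbb{N}$, let $a_n\in\mathcal{A}_{X_n}$. Suppose that there exists $a\in\mathcal{A}$ such that $\Lambda_{a_n}\to\Lambda_a$ in $\mathscr{L}(\mathcal{X},\mathfrak{H})$. Then $a\in\mathcal{A}_X$.
   Context: A Euclidean space is a finite-dimensional real Hilbert space. $\mathscr{L}(\mathcal{X},\mathfrak{H})$ is the space of linear operators from $\mathcal{X}$ to $\mathfrak{H}$ with the operator-norm topology. A spectral decomposition system for a Euclidean space $\mathfrak{H}$ is a tuple $(\mathcal{X},\mathsf{S},\gamma,(\Lambda_a)_{a\in\mathcal{A}})$ where $\mathcal{X}$ is a Euclidean space, $\mathsf{S}$ is a group acting on $\mathcal{X}$ such that each map $x\mapsto \mathsf{s}\cdot x$ ($\mathsf{s}\in\mathsf{S}$) is a linear isometry, $\gamma\colon\mathfrak{H}\to\mathcal{X}$ is a mapping, and each $\Lambda_a\colon\mathcal{X}\to\mathfrak{H}$ is a linear isometry (linear with $\|\Lambda_a x\|=\|x\|$), such that: [A] there exists a mapping $\tau\colon\mathcal{X}\to\mathcal{X}$ with $\tau(\mathsf{s}\cdot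 x)=\tau(x)$ for all $\mathsf{s},x$, $\tau(x)\in\mathsf{S}\cdot x=\{\mathsf{s}\cdot x:\mathsf{s}\in\mathsf{S}\}$ for all $x\in\mathcal{X}$, and $\gamma\circ\Lambda_a=\tau$ for all $a\in\mathcal{A}$; [B] for every $X\in\mathfrak{H}$ there exists $a\in\mathcal{A}$ with $X=\Lambda_a\gamma(X)$; [C] $\langle X,Y\rangle\le\langle\gamma(X),\gamma(Y)\rangle$ for all $X,Y\in\mathfrak{H}$. For $X\in\mathfrak{H}$, $\mathcal{A}_X=\{a\in\mathcal{A}: X=\Lambda_a\gamma(X)\}$. *)

theory Defs
  imports "HOL-Analysis.Analysis" "HOL-Algebra.Group"
begin

definition lin_isometry :: "('x::real_normed_vector \<Rightarrow> 'y::real_normed_vector) \<Rightarrow> bool" where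
  "lin_isometry f \<longleftrightarrow> linear f \<and> (\<forall>x. norm (f x) = norm x)"

definition isometric_group_action ::
  "('s, 'm) monoid_scheme \<Rightarrow> ('s \<Rightarrow> 'x::real_normed_vector \<Rightarrow> 'x) \<Rightarrow> bool" where
  "isometric_group_action G act \<longleftrightarrow>
     group G \<and>
     (\<forall>x. act \<one>\<^bsub>G\<^esub> x = x) \<and>
     (\<forall>g\<in>carrier G. \<forall>h\<in>carrier G. \<forall>x. act (g \<otimes>\<^bsub>G\<^esub> h) x = act g (act h x)) \<and>
     (\<forall>g\<in>carrier G. lin_isometry (act g))"

definition orbit :: "('s, 'm) monoid_scheme \<Rightarrow> ('s \<Rightarrow> 'x \<Rightarrow> 'x) \<Rightarrow> 'x \<Rightarrow> 'x set" where
  "orbit G act x = {act g x | g. g \<in> carrier G}"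

definition spectral_decomposition_system ::
  "('s, 'm) monoid_scheme \<Rightarrow> ('s \<Rightarrow> 'x::euclidean_space \<Rightarrow> 'x) \<Rightarrow> ('h::euclidean_space \<Rightarrow> 'x)
   \<Rightarrow> 'a set \<Rightarrow> ('a \<Rightarrow> 'x \<Rightarrow> 'h) \<Rightarrow> bool" where
  "spectral_decomposition_system G act gamma A Lam \<longleftrightarrow>
     isometric_group_action G act \<and>
     (\<forall>a\<in>A. lin_isometry (Lam a)) \<and>
     (\<exists>tau :: 'x \<Rightarrow> 'x.
        (\<forall>g\<in>carrier G. \<forall>x. tau (act g x) = tau x) \<and>
        (\<forall>x. tau x \<in> orbit G act x) \<and>
        (\<forall>a\<in>A. \<forall>x. gamma (Lam a x) = tau x)) \<and>
     (\<forall>X. \<exists>a\<in>A. X = Lam a (gamma X)) \<and>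
     (\<forall>X Y. inner X Y \<le> inner (gamma X) (gamma Y))"

definition spec_indices :: "'a set \<Rightarrow> ('a \<Rightarrow> 'x \<Rightarrow> 'h) \<Rightarrow> ('h \<Rightarrow> 'x) \<Rightarrow> 'h \<Rightarrow> 'a set" where
  "spec_indices A Lam gamma X = {a \<in> A. X = Lam a (gamma X)}"

end

theory Submission
  imports Defs
begin

text \<open>
  Under the spectral decomposition system, \<open>\<gamma>\<close> preserves norms (by [B], since each \<open>\<Lambda>\<^sub>a\<close> is an
  isometry) and, by [C], does not decrease inner products; together these make \<open>\<gamma>\<close>
  nonexpansive. Hence \<open>\<gamma>(X\<^sub>n) \<rightarrow> \<gamma>(X)\<close>, and passing to the limit in
  \<open>X\<^sub>n = \<Lambda>\<^bsub>a\<^sub>n\<^esub> \<gamma>(X\<^sub>n)\<close>, using joint continuity of operator application, gives \<open>X = \<Lambda>\<^sub>a \<gamma>(X)\<close>.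
\<close>

lemma lin_isometry_bounded_linear: "lin_isometry f \<Longrightarrow> bounded_linear f"
  unfolding lin_isometry_def linear_iff
  by (auto intro!: bounded_linear_intro[where K = 1])

lemma blinfun_apply_Blinfun_lin_isometry: "lin_isometry f \<Longrightarrow> blinfun_apply (Blinfun f) = f"
  by (simp add: bounded_linear_Blinfun_apply lin_isometry_bounded_linear)

lemma norm_diff_le_if_norm_eq_inner_le:
  fixes f :: "'a::real_inner \<Rightarrow> 'b::real_inner"
  assumes norm_eq: "\<And>x. norm (f x) = norm x"
    and inner_le: "\<And>x y. inner x y \<le> inner (f x) (f y)"
  shows "norm (f x - f y) \<le> norm (x - y)"
proof -
  have "(norm (f x - f y))\<^sup>2 = (norm (f x))\<^sup>2 + (norm (f y))\<^sup>2 - 2 * inner (f x) (f y)"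
    by (simp add: power2_norm_eq_inner inner_diff_left inner_diff_right inner_commute)
  also have "\<dots> \<le> (norm x)\<^sup>2 + (norm y)\<^sup>2 - 2 * inner x y"
    using inner_le[of x y] by (simp add: norm_eq)
  also have "\<dots> = (norm (x - y))\<^sup>2"
    by (simp add: power2_norm_eq_inner inner_diff_left inner_diff_right inner_commute)
  finally show ?thesis by (rule power2_le_imp_le) simp
qed

context
  fixes G :: "('s, 'm) monoid_scheme"
    and act :: "'s \<Rightarrow> 'x::euclidean_space \<Rightarrow> 'x"
    and gamma :: "'h::euclidean_space \<Rightarrow> 'x"
    and A :: "'a set"
    and Lam :: "'a \<Rightarrow> 'x \<Rightarrow> 'h"
  assumes sds: "spectral_decomposition_system G act gamma A Lam"
begin

lemma sds_lin_isometry: "b \<in> A \<Longrightarrow> lin_isometry (Lam b)"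
  using sds unfolding spectral_decomposition_system_def by blast

lemma sds_norm_gamma: "norm (gamma Y) = norm Y"
proof -
  obtain b where "b \<in> A" and Y_eq: "Y = Lam b (gamma Y)"
    using sds unfolding spectral_decomposition_system_def by blast
  then have "norm (Lam b (gamma Y)) = norm (gamma Y)"
    using sds_lin_isometry unfolding lin_isometry_def by blast
  then show ?thesis by (simp flip: Y_eq)
qed

lemma sds_norm_diff_gamma_le: "norm (gamma Y - gamma Z) \<le> norm (Y - Z)"
proof (rule norm_diff_le_if_norm_eq_inner_le)
  show "inner Y Z \<le> inner (gamma Y) (gamma Z)" for Y Z
    using sds unfolding spectral_decomposition_system_def by blast
qed (rule sds_norm_gamma)

lemma sds_tendsto_gamma:
  assumes "Xs \<longlonglongrightarrow> X"
  shows "(\<lambda>n. gamma (Xs n)) \<longlonglongrightarrow> gamma X"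
proof -
  have "(\<lambda>n. norm (Xs n - X)) \<longlonglongrightarrow> 0"
    using assms by (simp add: tendsto_norm_zero_iff LIM_zero_iff)
  then have "(\<lambda>n. gamma (Xs n) - gamma X) \<longlonglongrightarrow> 0"
    by (rule Lim_null_comparison[rotated]) (simp add: sds_norm_diff_gamma_le)
  then show ?thesis by (rule LIM_zero_cancel)
qed

end

theorem proposition2p17:
  fixes G :: "('s, 'm) monoid_scheme"
    and act :: "'s \<Rightarrow> 'x::euclidean_space \<Rightarrow> 'x"
    and gamma :: "'h::euclidean_space \<Rightarrow> 'x"
    and A :: "'a set"
    and Lam :: "'a \<Rightarrow> 'x \<Rightarrow> 'h"
    and Xs :: "nat \<Rightarrow> 'h" and X :: 'h
    and as :: "nat \<Rightarrow> 'a" and a :: 'a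
  assumes sds: "spectral_decomposition_system G act gamma A Lam"
    and closed_Lam: "closed ((\<lambda>b. Blinfun (Lam b)) ` A)"
    and conv: "Xs \<longlonglongrightarrow> X"
    and as_in: "\<forall>n. as n \<in> spec_indices A Lam gamma (Xs n)"
    and a_in: "a \<in> A"
    and Lam_conv: "(\<lambda>n. Blinfun (Lam (as n))) \<longlonglongrightarrow> Blinfun (Lam a)"
  shows "a \<in> spec_indices A Lam gamma X"
proof -
  have Xs_eq: "Xs n = Blinfun (Lam (as n)) (gamma (Xs n))" for n
    using as_in sds_lin_isometry[OF sds]
    by (simp add: spec_indices_def blinfun_apply_Blinfun_lin_isometry)
  have "(\<lambda>n. Blinfun (Lam (as n)) (gamma (Xs n))) \<longlonglongrightarrow> Blinfun (Lam a) (gamma X)"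
    using Lam_conv sds_tendsto_gamma[OF sds conv] by (rule bounded_bilinear.tendsto[OF bounded_bilinear_blinfun_apply])
  then have "Xs \<longlonglongrightarrow> Lam a (gamma X)"
    by (simp flip: Xs_eq add: blinfun_apply_Blinfun_lin_isometry sds_lin_isometry[OF sds a_in])
  then have "X = Lam a (gamma X)"
    using conv LIMSEQ_unique by blast
  then show ?thesis
    using a_in by (simp add: spec_indices_def)
qed

end
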